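(* Let $q>1$, let $\delta_0,\dots,\delta_{m-1}$ be positive numbers, and set $V_i=\sum_{j=i}^{m-1}\delta_j$ for $0\le i\le m-1$. Then $$\sum_{i=0}^{m-1}\frac{V_i^q}{\delta_i}\ge\frac{q-1}4\sum_{j=1}^{m-1}jV_j^{q-1}.$$ *)

theory Defs
  imports Complex_Main
begin

end

theory Submission
  imports Defs "HOL-Analysis.Derivative"
begin

(* Extend V by V m = 0 and put x i = V i powr (q - 1). The tangent line of the convex function
   t powr q gives V i powr q / \<delta> i \<ge> (q - 1) * x (i + 1)^2 / (x i - x (i + 1)), and AM-GM turns this
   into a bound linear in x i and x (i + 1). Up to the telescoping potential
   (q - 1) / 16 * (i + 1)^2 * x i, the i-th term is then at least (q - 1) / 4 * (i + 1) * x (i + 1).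
   For i = 0 the potential would involve V 0, which is not controlled by the right-hand side;
   there the tangent line alone gives V 0 powr q / \<delta> 0 \<ge> q * x 1. *)

lemma powr_above_tangent:
  fixes a b q :: real
  assumes "0 \<le> b" "b \<le> a" "1 \<le> q"
  shows "q * b powr (q - 1) * (a - b) \<le> a powr q - b powr q"
proof (cases "b = 0")
  case True
  with assms show ?thesis by simp
next
  case False
  with assms have "0 < b" by simp
  from assms(3) have "convex_on {0<..} (\<lambda>x. x powr q)" by (rule powr_convex)
  with \<open>0 < b\<close> assms(2) show ?thesis
    by (intro convex_on_imp_above_tangent[where A = "{0<..}"])
       (auto intro!: derivative_eq_intros simp: interior_open)
qed

lemma mult_powr_le_powr_div:
  fixes b d q :: real
  assumes "0 \<le> b" "0 < d" "1 \<le> q"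
  shows "q * b powr (q - 1) \<le> (b + d) powr q / d"
proof -
  have "q * b powr (q - 1) * d \<le> (b + d) powr q - b powr q"
    using powr_above_tangent[of b "b + d" q] assms by simp
  also have "\<dots> \<le> (b + d) powr q" by simp
  finally show ?thesis using assms(2) by (simp add: field_simps)
qed

lemma powr_diff_lower_bound:
  fixes b d q :: real
  assumes "0 \<le> b" "0 < d" "1 \<le> q"
  shows "(q - 1) * d * (b powr (q - 1))\<^sup>2
           \<le> (b + d) powr q * ((b + d) powr (q - 1) - b powr (q - 1))"
proof -
  define a p where "a = b + d" and "p = q - 1"
  have "0 \<le> a" "0 \<le> p" using assms by (simp_all add: a_def p_def)
  have split_powr: "x powr q = x * x powr p" if "0 \<le> x" for x :: real
    using that powr_add[of x 1 p] by (simp add: p_def)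
  have "q * b powr p * d \<le> a powr q - b powr q"
    using powr_above_tangent[of b a q] assms by (simp add: a_def p_def)
  then have tangent: "p * b powr p * d \<le> a * (a powr p - b powr p)"
    using split_powr[OF \<open>0 \<le> a\<close>] split_powr[OF assms(1)]
    by (simp add: a_def p_def algebra_simps)
  have "b powr p \<le> a powr p"
    using assms \<open>0 \<le> p\<close> by (intro powr_mono2) (simp_all add: a_def)
  then have "p * d * (b powr p)\<^sup>2 \<le> a powr p * (p * b powr p * d)"
    using assms \<open>0 \<le> p\<close>
    by (simp add: power2_eq_square mult_left_mono mult_right_mono algebra_simps)
  also have "\<dots> \<le> a powr p * (a * (a powr p - b powr p))"
    using tangent by (intro mult_left_mono) simp_all
  also have "\<dots> = a powr q * (a powr p - b powr p)"
    using split_powr[OF \<open>0 \<le> a\<close>] by simp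
  finally show ?thesis by (simp add: a_def p_def)
qed

lemma two_mult_minus_square_le_div:
  fixes x d z :: real
  assumes "0 < x" "0 < d"
  shows "2 * z - z\<^sup>2 * d / x \<le> x / d"
proof -
  have "x / d - (2 * z - z\<^sup>2 * d / x) = (x - z * d)\<^sup>2 / (x * d)"
    using assms by (simp add: field_simps power2_eq_square)
  moreover have "0 \<le> (x - z * d)\<^sup>2 / (x * d)" using assms by simp
  ultimately show ?thesis by linarith
qed

lemma powr_div_ge_potential_step:
  fixes b d q k :: real
  assumes "0 \<le> b" "0 < d" "1 \<le> q" "0 \<le> k"
  shows "(q - 1) / 4 * (k + 1) * b powr (q - 1)
           + (q - 1) / 16 * ((k + 2)\<^sup>2 * b powr (q - 1) - (k + 1)\<^sup>2 * (b + d) powr (q - 1))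
         \<le> (b + d) powr q / d"
proof -
  define p A B where "p = q - 1" and "A = (b + d) powr p" and "B = b powr p"
  define z where "z = p / 4 * (k + 1) * B"
  have "0 \<le> p" "0 \<le> B" using assms by (simp_all add: p_def B_def)
  have "0 < (b + d) powr q" using assms by simp
  then have amgm: "2 * z - z\<^sup>2 * d / (b + d) powr q \<le> (b + d) powr q / d"
    using assms(2) by (rule two_mult_minus_square_le_div)
  have "p * d * B\<^sup>2 / (b + d) powr q \<le> A - B"
    using powr_diff_lower_bound[OF assms(1-3)] \<open>0 < (b + d) powr q\<close>
    by (simp add: A_def B_def p_def divide_le_eq mult.commute)
  then have "p / 16 * (k + 1)\<^sup>2 * (p * d * B\<^sup>2 / (b + d) powr q) \<le> p / 16 * (k + 1)\<^sup>2 * (A - B)"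
    using \<open>0 \<le> p\<close> by (intro mult_left_mono) simp_all
  moreover have "z\<^sup>2 * d / (b + d) powr q = p / 16 * (k + 1)\<^sup>2 * (p * d * B\<^sup>2 / (b + d) powr q)"
    by (simp add: z_def power2_eq_square)
  moreover have "0 \<le> p / 16 * (2 * k + 1) * B"
    using \<open>0 \<le> p\<close> \<open>0 \<le> B\<close> assms(4) by simp
  moreover have "p / 4 * (k + 1) * B + p / 16 * ((k + 2)\<^sup>2 * B - (k + 1)\<^sup>2 * A)
      = 2 * z - p / 16 * (k + 1)\<^sup>2 * (A - B) - p / 16 * (2 * k + 1) * B"
    by (simp add: z_def power2_eq_square field_simps)
  ultimately have "p / 4 * (k + 1) * B + p / 16 * ((k + 2)\<^sup>2 * B - (k + 1)\<^sup>2 * A)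
      \<le> (b + d) powr q / d"
    using amgm by linarith
  then show ?thesis by (simp add: A_def B_def p_def)
qed

lemma sum_powr_div_ge_weighted_sum:
  fixes q :: real and \<delta> W :: "nat \<Rightarrow> real"
  assumes "1 < q"
    and \<delta>_pos: "\<And>i. i < m \<Longrightarrow> 0 < \<delta> i"
    and W_Suc: "\<And>i. i < m \<Longrightarrow> W i = \<delta> i + W (Suc i)"
    and "W m = 0"
  shows "(q - 1) / 4 * (\<Sum>j=1..m. real j * W j powr (q - 1)) \<le> (\<Sum>i<m. W i powr q / \<delta> i)"
proof -
  define p where "p = q - 1"
  define Q where "Q i = (if i = 0 then 0 else p / 16 * (real i + 1)\<^sup>2 * W i powr p)" for i
  have W_nonneg: "0 \<le> W i" if "i \<le> m" for i
    using that
    by (induction rule: inc_induct) (simp_all add: \<open>W m = 0\<close> W_Suc \<delta>_pos add_nonneg_nonneg less_imp_le)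
  have step: "p / 4 * real (Suc i) * W (Suc i) powr p + (Q (Suc i) - Q i) \<le> W i powr q / \<delta> i"
    if "i < m" for i
  proof (cases "i = 0")
    case True
    have "p / 2 * W 1 powr p \<le> q * W 1 powr p"
      using \<open>1 < q\<close> by (intro mult_right_mono) (simp_all add: p_def)
    also have "\<dots> \<le> W 0 powr q / \<delta> 0"
      using mult_powr_le_powr_div[of "W 1" "\<delta> 0" q] W_nonneg[of 1] \<delta>_pos[of 0] W_Suc[of 0]
        \<open>1 < q\<close> that True
      by (simp add: p_def add.commute)
    finally show ?thesis using True by (simp add: Q_def)
  next
    case False
    then have "Q (Suc i) - Q i
        = p / 16 * ((real i + 2)\<^sup>2 * W (Suc i) powr p - (real i + 1)\<^sup>2 * W i powr p)"
      by (simp add: Q_def right_diff_distrib add.commute)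
    moreover have "p / 4 * (real i + 1) * W (Suc i) powr p
        + p / 16 * ((real i + 2)\<^sup>2 * W (Suc i) powr p - (real i + 1)\<^sup>2 * W i powr p)
        \<le> W i powr q / \<delta> i"
      using powr_div_ge_potential_step[of "W (Suc i)" "\<delta> i" q "real i"]
        W_nonneg[of "Suc i"] \<delta>_pos[OF that] W_Suc[OF that] \<open>1 < q\<close> that
      by (simp add: p_def add.commute)
    ultimately show ?thesis by (simp add: add.commute)
  qed
  have telescope: "(\<Sum>i<m. Q (Suc i) - Q i) = 0"
    using sum_lessThan_telescope[of Q m] by (simp add: Q_def \<open>W m = 0\<close>)
  have "p / 4 * (\<Sum>j=1..m. real j * W j powr p)
      = (\<Sum>i<m. p / 4 * real (Suc i) * W (Suc i) powr p + (Q (Suc i) - Q i))"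
    by (simp add: sum.distrib telescope sum_distrib_left sum.atLeast1_atMost_eq mult.assoc)
  also have "\<dots> \<le> (\<Sum>i<m. W i powr q / \<delta> i)"
    by (intro sum_mono step) simp
  finally show ?thesis by (simp add: p_def)
qed

theorem lemma6p6:
  fixes q :: real and m :: nat and \<delta> V :: "nat \<Rightarrow> real"
  assumes "q > 1"
    and "\<And>i. i < m \<Longrightarrow> \<delta> i > 0"
    and "\<And>i. i < m \<Longrightarrow> V i = (\<Sum>j=i..m-1. \<delta> j)"
  shows "(\<Sum>i<m. V i powr q / \<delta> i) \<ge> (q - 1) / 4 * (\<Sum>j=1..m-1. real j * V j powr (q - 1))"
proof -
  define W where "W i = (if i < m then V i else 0)" for i
  have "W i = \<delta> i + W (Suc i)" if "i < m" for i
    using that assms(3) by (cases "Suc i < m") (auto simp: W_def sum.atLeast_Suc_atMost)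
  then have "(q - 1) / 4 * (\<Sum>j=1..m. real j * W j powr (q - 1)) \<le> (\<Sum>i<m. W i powr q / \<delta> i)"
    using assms(1,2) by (intro sum_powr_div_ge_weighted_sum) (simp_all add: W_def)
  moreover have "(\<Sum>j=1..m. real j * W j powr (q - 1)) = (\<Sum>j=1..m-1. real j * V j powr (q - 1))"
    by (cases m) (simp_all add: W_def)
  moreover have "(\<Sum>i<m. W i powr q / \<delta> i) = (\<Sum>i<m. V i powr q / \<delta> i)"
    by (simp add: W_def)
  ultimately show ?thesis by simp
qed

end
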